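(* For each $0\le s\le L$, the space $V_L^s$ is stable under $Q(z;p)$, and $Q(z;p)|_{V_L^s}$ is a polynomial in $z$ of degree exactly $s$ with coefficients in $\mathrm{End}(V_L^s)[[p]]$.
   Context: All vector spaces are over $\mathbb C$. Let $V^\infty$ have basis $(w_i)_{i\in\mathbb Z_{\ge0}}$, graded with $w_i$ of weight $i$. For $\ell\in\mathbb C$, $\mathcal W^\ell$ denotes the representation of the Yangian-type algebra $\mathbb Y^1$ on $V^\infty$ given by the operators ($w_{-1}=0$): $t_{11}(z)w_i=(z+\ell-i)w_i$, $t_{12}(z)w_i=(\ell-i)w_{i+1}$, $t_{21}(z)w_i=iw_{i-1}$, $t_{22}(z)w_i=(z+i)w_i$, and $T^{\mathcal W^\ell}(z)=\sum_{i,j=1}^2E_{ij}\otimes t_{ij}(z)\in\mathrm{End}(\mathbb C^2\otimes V^\infty)[z]$ where $E_{ij}$ are the elementary matrices for a basis $(v_1,v_2)$ of $\mathbb C^2$ (these satisfy the RTT relation $R^{12}(z-w)T^{13}(z)T^{23}(w)=T^{23}(w)T^{13}(z)R^{12}(z-w)$ with Yang's $R(z)=\frac{z}{z+1}\mathrm{Id}+\frac{1}{z+1}P$, $P$ the flip). Fix $L\in\mathbb Z_{>0}$ and $a_1,\dots,a_L\in\mathbb C^\times$. Let $V_L=(\mathbb C^2)^{\otimes L}$ and, for $0\le s\le L$, let $V_L^s$ be the span of the $v_{i_1}\otimes\cdots\otimes v_{i_L}$ in which the index $1$ appears exactly $s$ times. For a graded module $W=\bigoplus_\alpha W_\alpha$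 with finite-dimensional weight spaces, weights bounded below, and $T^W(z)=\sum E_{ij}\otimes t^W_{ij}(z)$, the monodromy matrix is $T^{W,L}(z)=T^W(z+a_1)_{1,L+1}T^W(z+a_2)_{2,L+1}\cdots T^W(z+a_L)_{L,L+1}\in\mathrm{End}(V_L\otimes W)$, where the subscript $(l,L+1)$ means acting on the $l$-th factor of $V_L$ and on $W$, and the transfer matrix is $t_W(z;p)=\sum_{\alpha}p^\alpha(\mathrm{Id}_{V_L}\otimes\mathrm{Tr}_{W_\alpha})(T^{W,L}(z))$, $p$ a formal variable. The Baxter Q-operator is $Q(z;p):=t_{\mathcal W^z}(0;p)$, i.e. the transfer matrix of $\mathcal W^\ell$ evaluated at spectral parameter $0$ with spin parameter $\ell=z$; it lies in $\mathrm{End}(V_L)[z][[p]]$. *)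

theory Defs
  imports "HOL-Computational_Algebra.Polynomial" "HOL-Computational_Algebra.Formal_Power_Series"
begin

(* Vectors of V^\<infinity> with coefficients in C[z] (the spin parameter l = z is the
   polynomial variable): coefficient functions  k \<mapsto> coefficient of w_k.
   tW i j u  is the operator t_ij(u) of W^z  (with l := z). *)
definition tW :: "nat \<Rightarrow> nat \<Rightarrow> complex \<Rightarrow> (nat \<Rightarrow> complex poly) \<Rightarrow> (nat \<Rightarrow> complex poly)" where
  "tW i j u v =
    (if i = 1 \<and> j = 1 then (\<lambda>k. [:u - of_nat k, 1:] * v k)
     else if i = 1 \<and> j = 2 then (\<lambda>k. if k = 0 then 0 else [:- of_nat (k - 1), 1:] * v (k - 1))
     else if i = 2 \<and> j = 1 then (\<lambda>k. [:of_nat (k + 1):] * v (k + 1))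
     else if i = 2 \<and> j = 2 then (\<lambda>k. [:u + of_nat k:] * v k)
     else (\<lambda>k. 0))"

(* Vectors of V_L \<otimes> W: functions (index list e = (i_1..i_L), weight k) \<mapsto> coefficient of
   v_{i_1}\<otimes>...\<otimes>v_{i_L}\<otimes>w_k.  T_loc u l = T^W(u)_{l,L+1}, acting on the l-th tensor
   factor of V_L (0-based) and on W. *)
definition T_loc :: "complex \<Rightarrow> nat \<Rightarrow> (nat list \<Rightarrow> nat \<Rightarrow> complex poly) \<Rightarrow> (nat list \<Rightarrow> nat \<Rightarrow> complex poly)" where
  "T_loc u l X = (\<lambda>e k. \<Sum>b\<in>{1,2}. tW (e ! l) b u (\<lambda>m. X (e[l := b]) m) k)"

(* mono a m = T^W(0 + a_1)_{1} T^W(0 + a_2)_{2} ... T^W(0 + a_m)_{m} *)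
fun mono :: "complex list \<Rightarrow> nat \<Rightarrow> (nat list \<Rightarrow> nat \<Rightarrow> complex poly) \<Rightarrow> (nat list \<Rightarrow> nat \<Rightarrow> complex poly)" where
  "mono a 0 X = X"
| "mono a (Suc m) X = mono a m (T_loc (a ! m) m X)"

(* Matrix entry (e,f) of Q(z;p) = t_{W^z}(0;p): \<Sum>_n p^n <v_e \<otimes> w_n, T^{W,L}(0) (v_f \<otimes> w_n)>,
   each weight space W_n being spanned by w_n. *)
definition Qentry :: "complex list \<Rightarrow> nat list \<Rightarrow> nat list \<Rightarrow> complex poly fps" where
  "Qentry a e f = Abs_fps (\<lambda>n. mono a (length a) (\<lambda>e' k. if e' = f \<and> k = n then 1 else 0) e n)"

(* basis indices of V_L and of V_L^s *)
definition idx :: "nat \<Rightarrow> nat list set" where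
  "idx L = {e. length e = L \<and> set e \<subseteq> {1, 2}}"

definition sector :: "nat \<Rightarrow> nat \<Rightarrow> nat list set" where
  "sector L s = {e \<in> idx L. count_list e 1 = s}"

end

theory Submission
  imports Defs
begin

text \<open>
  Label a basis vector \<open>v\<^sub>e \<otimes> w\<^sub>k\<close> of \<open>V\<^sub>L \<otimes> V\<^sup>\<infinity>\<close> by its charge, the number of \<open>v\<^sub>1\<close>'s in \<open>e\<close>
  minus \<open>k\<close>. Every \<open>t\<^sub>i\<^sub>j(u)\<close> shifts the weight by \<open>j - i\<close>, so each local factor of the monodromy
  matrix, hence also \<open>Q(z;p)\<close>, preserves the charge; on the diagonal \<open>k = n\<close> of the trace this
  means \<open>V\<^sub>L\<^sup>s\<close> is stable. The spin parameter \<open>z\<close> enters only through \<open>t\<^sub>1\<^sub>1\<close> and \<open>t\<^sub>1\<^sub>2\<close>, each linearly,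
  and both produce a \<open>v\<^sub>1\<close> at their site; so an entry with output in \<open>V\<^sub>L\<^sup>s\<close> has \<open>z\<close>-degree at most \<open>s\<close>.
  Finally, each factor of the monodromy matrix touches a single site, so the diagonal entry
  \<open>\<langle>v\<^sub>f \<otimes> w\<^sub>0, T(0) v\<^sub>f \<otimes> w\<^sub>0\<rangle>\<close> only involves the weight-preserving \<open>t\<^sub>f\<^sub>l\<^sub>f\<^sub>l(a\<^sub>l)\<close> on \<open>w\<^sub>0\<close>; it is the
  product of the \<open>s\<close> linear factors \<open>z + a\<^sub>l\<close> (where \<open>f\<^sub>l = 1\<close>) and the nonzero constants \<open>a\<^sub>l\<close>
  (where \<open>f\<^sub>l = 2\<close>), a polynomial of degree exactly \<open>s\<close>.
\<close>

type_synonym vec = "nat list \<Rightarrow> nat \<Rightarrow> complex poly"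

lemma count_list_update:
  "i < length xs \<Longrightarrow> count_list (xs[i := y]) x + (if xs ! i = x then 1 else 0)
     = count_list xs x + (if y = x then 1 else 0)"
proof (induction xs arbitrary: i)
  case (Cons z xs)
  show ?case
  proof (cases i)
    case (Suc j)
    then show ?thesis using Cons.IH[of j] Cons.prems by auto
  qed auto
qed simp

lemma sum_nth_eq_count_list:
  "(\<Sum>i<length xs. if xs ! i = x then 1 else (0::nat)) = count_list xs x"
  by (induction xs) (simp_all add: sum.lessThan_Suc_shift del: sum.lessThan_Suc)

lemma degree_mult_le_add: "degree p \<le> i \<Longrightarrow> degree q \<le> j \<Longrightarrow> degree (p * q) \<le> i + j"
  using degree_mult_le[of p q] by linarith

lemma T_loc_nth_1:
  assumes "e ! l = 1"
  shows "T_loc u l X e k = [:u - of_nat k, 1:] * X e k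
           + (if k = 0 then 0 else [:- of_nat (k - 1), 1:] * X (e[l := 2]) (k - 1))"
  using assms list_update_id[of e l] by (simp add: T_loc_def tW_def)

lemma T_loc_nth_2:
  assumes "e ! l = 2"
  shows "T_loc u l X e k = [:of_nat (k + 1):] * X (e[l := 1]) (k + 1) + [:u + of_nat k:] * X e k"
  using assms list_update_id[of e l] by (simp add: T_loc_def tW_def)

lemma T_loc_nth_other: "e ! l \<notin> {1, 2} \<Longrightarrow> T_loc u l X e k = 0"
  by (simp add: T_loc_def tW_def)

definition charge_supported :: "nat \<Rightarrow> int \<Rightarrow> vec \<Rightarrow> bool" where
  "charge_supported L c X \<longleftrightarrow>
     (\<forall>e k. length e = L \<longrightarrow> X e k \<noteq> 0 \<longrightarrow> int (count_list e 1) - int k = c)"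

lemma T_loc_charge_supported:
  assumes X: "charge_supported L c X" and l: "l < L"
  shows "charge_supported L c (T_loc u l X)"
  unfolding charge_supported_def
proof (intro allI impI)
  fix e k assume len: "length e = L" and nz: "T_loc u l X e k \<noteq> 0"
  have charge: "int (count_list e' 1) - int k' = c" if "length e' = L" "X e' k' \<noteq> 0" for e' k'
    using X that unfolding charge_supported_def by blast
  have le: "l < length e" using len l by simp
  consider "e ! l = 1" | "e ! l = 2" | "e ! l \<notin> {1, 2}" by blast
  then show "int (count_list e 1) - int k = c"
  proof cases
    case 1
    then have "X e k \<noteq> 0 \<or> (k \<noteq> 0 \<and> X (e[l := 2]) (k - 1) \<noteq> 0)"
      using nz by (auto simp: T_loc_nth_1 split: if_splits)
    then show ?thesis
      using charge[of e k] charge[of "e[l := 2]" "k - 1"] count_list_update[OF le, of 2 1] 1 len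
      by auto
  next
    case 2
    then have "X (e[l := 1]) (k + 1) \<noteq> 0 \<or> X e k \<noteq> 0"
      using nz by (auto simp: T_loc_nth_2)
    then show ?thesis
      using charge[of e k] charge[of "e[l := 1]" "k + 1"] count_list_update[OF le, of 1 1] 2 len
      by auto
  next
    case 3
    with nz show ?thesis by (simp add: T_loc_nth_other)
  qed
qed

lemma mono_charge_supported:
  "charge_supported L c X \<Longrightarrow> m \<le> L \<Longrightarrow> charge_supported L c (mono a m X)"
  by (induction m arbitrary: X) (simp_all add: T_loc_charge_supported)

definition degree_le_count_from :: "nat \<Rightarrow> nat \<Rightarrow> vec \<Rightarrow> bool" where
  "degree_le_count_from L m X \<longleftrightarrow>
     (\<forall>e k. length e = L \<longrightarrow> degree (X e k) \<le> count_list (drop m e) 1)"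

lemma T_loc_degree_le_count_from:
  assumes X: "degree_le_count_from L (Suc m) X" and m: "m < L"
  shows "degree_le_count_from L m (T_loc u m X)"
  unfolding degree_le_count_from_def
proof (intro allI impI)
  fix e :: "nat list" and k assume len: "length e = L"
  define d where "d = count_list (drop (Suc m) e) 1"
  have drop_m: "drop m e = e ! m # drop (Suc m) e"
    using len m by (simp add: Cons_nth_drop_Suc)
  have deg: "degree (X (e[m := b]) k') \<le> d" for b k'
    using X len unfolding degree_le_count_from_def d_def
    by (metis drop_update_cancel length_list_update lessI)
  consider "e ! m = 1" | "e ! m = 2" | "e ! m \<notin> {1, 2}" by blast
  then show "degree (T_loc u m X e k) \<le> count_list (drop m e) 1"
  proof cases
    case 1
    have "degree ([:u - of_nat k, 1:] * X e k) \<le> 1 + d"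
      using deg[of "e ! m" k] by (intro degree_mult_le_add) auto
    moreover have "degree ([:- of_nat (k - 1), 1:] * X (e[m := 2]) (k - 1)) \<le> 1 + d"
      using deg by (intro degree_mult_le_add) auto
    ultimately show ?thesis
      using 1 drop_m d_def by (auto simp: T_loc_nth_1 simp del: mult_pCons_left intro!: degree_add_le)
  next
    case 2
    have "degree ([:of_nat (k + 1):] * X (e[m := 1]) (k + 1)) \<le> 0 + d"
      using deg by (intro degree_mult_le_add) auto
    moreover have "degree ([:u + of_nat k:] * X e k) \<le> 0 + d"
      using deg[of "e ! m" k] by (intro degree_mult_le_add) auto
    ultimately show ?thesis
      using 2 drop_m d_def by (auto simp: T_loc_nth_2 simp del: mult_pCons_left intro!: degree_add_le)
  next
    case 3
    then show ?thesis by (simp add: T_loc_nth_other)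
  qed
qed

lemma mono_degree_le_count_from:
  "degree_le_count_from L m X \<Longrightarrow> m \<le> L \<Longrightarrow> degree_le_count_from L 0 (mono a m X)"
  by (induction m arbitrary: X) (simp_all add: T_loc_degree_le_count_from)

definition supported_on_prefix :: "nat list \<Rightarrow> nat \<Rightarrow> vec \<Rightarrow> bool" where
  "supported_on_prefix f m Y \<longleftrightarrow> (\<forall>e k. Y e k \<noteq> 0 \<longrightarrow> take m e = take m f)"

definition diag_factor :: "complex list \<Rightarrow> nat list \<Rightarrow> nat \<Rightarrow> complex poly" where
  "diag_factor a f l = (if f ! l = 1 then [:a ! l, 1:] else [:a ! l:])"

lemma T_loc_supported_on_prefix:
  assumes Y: "supported_on_prefix f (Suc m) Y"
  shows "supported_on_prefix f m (T_loc u m Y)"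
  unfolding supported_on_prefix_def
proof (intro allI impI)
  fix e k assume "T_loc u m Y e k \<noteq> 0"
  moreover have "T_loc u m Y e k = 0" if "\<And>b k'. Y (e[m := b]) k' = 0"
    using that by (simp add: T_loc_def tW_def)
  ultimately obtain b k' where "Y (e[m := b]) k' \<noteq> 0" by blast
  then have "take (Suc m) (e[m := b]) = take (Suc m) f"
    using Y unfolding supported_on_prefix_def by blast
  then have "take m (take (Suc m) (e[m := b])) = take m (take (Suc m) f)" by simp
  then show "take m e = take m f" by (simp add: min_def)
qed

lemma T_loc_diagonal_weight_0:
  assumes Y: "supported_on_prefix f (Suc m) Y" and m: "m < length f" and f: "set f \<subseteq> {1, 2}"
  shows "T_loc (a ! m) m Y f 0 = diag_factor a f m * Y f 0"
proof (cases "f ! m = 1")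
  case True
  then show ?thesis by (simp add: T_loc_nth_1 diag_factor_def)
next
  case False
  then have f_m: "f ! m = 2" using m f nth_mem by blast
  have "Y (f[m := 1]) 1 = 0"
  proof (rule ccontr)
    assume "Y (f[m := 1]) 1 \<noteq> 0"
    then have "take (Suc m) (f[m := 1]) ! m = take (Suc m) f ! m"
      using Y unfolding supported_on_prefix_def by metis
    with m f_m show False by simp
  qed
  with f_m show ?thesis by (simp add: T_loc_nth_2 diag_factor_def)
qed

lemma mono_diagonal_weight_0:
  "supported_on_prefix f m Y \<Longrightarrow> m \<le> length f \<Longrightarrow> set f \<subseteq> {1, 2} \<Longrightarrow>
     mono a m Y f 0 = (\<Prod>l<m. diag_factor a f l) * Y f 0"
proof (induction m arbitrary: Y)
  case (Suc m)
  have "mono a (Suc m) Y f 0 = mono a m (T_loc (a ! m) m Y) f 0" by simp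
  also have "\<dots> = (\<Prod>l<m. diag_factor a f l) * T_loc (a ! m) m Y f 0"
    using Suc by (simp add: T_loc_supported_on_prefix)
  also have "\<dots> = (\<Prod>l<Suc m. diag_factor a f l) * Y f 0"
    using Suc by (simp add: T_loc_diagonal_weight_0 mult.assoc)
  finally show ?case .
qed simp

lemma diag_factor_nonzero: "a ! l \<noteq> 0 \<Longrightarrow> diag_factor a f l \<noteq> 0"
  by (simp add: diag_factor_def)

lemma prod_diag_factor_nonzero:
  "\<forall>x\<in>set a. x \<noteq> 0 \<Longrightarrow> (\<Prod>l<length a. diag_factor a f l) \<noteq> 0"
  by (simp add: diag_factor_nonzero)

lemma degree_prod_diag_factor:
  assumes "\<forall>x\<in>set a. x \<noteq> 0" and "length f = length a"
  shows "degree (\<Prod>l<length a. diag_factor a f l) = count_list f 1"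
proof -
  have "degree (\<Prod>l<length a. diag_factor a f l) = (\<Sum>l<length a. degree (diag_factor a f l))"
    using assms(1) by (intro degree_prod_sum_eq) (simp add: diag_factor_nonzero)
  also have "\<dots> = (\<Sum>l<length f. if f ! l = 1 then 1 else 0)"
    using assms(2) unfolding diag_factor_def by (intro sum.cong) auto
  finally show ?thesis by (simp add: sum_nth_eq_count_list)
qed

definition basis_vec :: "nat list \<Rightarrow> nat \<Rightarrow> vec" where
  "basis_vec f n = (\<lambda>e k. if e = f \<and> k = n then 1 else 0)"

lemma fps_nth_Qentry: "fps_nth (Qentry a e f) n = mono a (length a) (basis_vec f n) e n"
  by (simp add: Qentry_def basis_vec_def)

lemma Qentry_eq_0_off_sector:
  assumes "f \<in> sector (length a) s" and "e \<in> idx (length a)" and "e \<notin> sector (length a) s"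
  shows "Qentry a e f = 0"
proof (rule fps_ext)
  fix n
  have "charge_supported (length a) (int s - int n) (basis_vec f n)"
    using assms(1) by (auto simp: charge_supported_def basis_vec_def sector_def)
  then have "charge_supported (length a) (int s - int n) (mono a (length a) (basis_vec f n))"
    by (simp add: mono_charge_supported)
  moreover have "length e = length a" and "count_list e 1 \<noteq> s"
    using assms(2,3) by (auto simp: sector_def idx_def)
  ultimately show "fps_nth (Qentry a e f) n = fps_nth 0 n"
    unfolding fps_nth_Qentry charge_supported_def by force
qed

lemma degree_Qentry_le:
  assumes "e \<in> sector (length a) s"
  shows "degree (fps_nth (Qentry a e f) n) \<le> s"
proof -
  have "degree_le_count_from (length a) (length a) (basis_vec f n)"
    by (simp add: degree_le_count_from_def basis_vec_def)
  then have "degree_le_count_from (length a) 0 (mono a (length a) (basis_vec f n))"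
    by (simp add: mono_degree_le_count_from)
  with assms show ?thesis
    unfolding fps_nth_Qentry degree_le_count_from_def sector_def idx_def by auto
qed

lemma Qentry_diagonal_weight_0:
  assumes "f \<in> idx (length a)"
  shows "fps_nth (Qentry a f f) 0 = (\<Prod>l<length a. diag_factor a f l)"
proof -
  have "supported_on_prefix f (length a) (basis_vec f 0)"
    by (simp add: supported_on_prefix_def basis_vec_def)
  with assms show ?thesis
    unfolding fps_nth_Qentry idx_def by (simp add: mono_diagonal_weight_0 basis_vec_def)
qed

lemma replicate_in_sector: "s \<le> L \<Longrightarrow> replicate s 1 @ replicate (L - s) 2 \<in> sector L s"
  by (auto simp: sector_def idx_def count_list_eq_length_filter)

theorem mainTheorem15:
  fixes a :: "complex list" and s :: nat
  assumes "length a > 0" and "\<forall>x\<in>set a. x \<noteq> 0" and "s \<le> length a"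
  shows "(\<forall>f\<in>sector (length a) s. \<forall>e\<in>idx (length a). e \<notin> sector (length a) s \<longrightarrow> Qentry a e f = 0)
       \<and> (\<forall>k>s. \<forall>e\<in>sector (length a) s. \<forall>f\<in>sector (length a) s. \<forall>n.
             coeff (fps_nth (Qentry a e f) n) k = 0)
       \<and> (\<exists>e\<in>sector (length a) s. \<exists>f\<in>sector (length a) s. \<exists>n.
             coeff (fps_nth (Qentry a e f) n) s \<noteq> 0)"
proof (intro conjI)
  show "\<forall>f\<in>sector (length a) s. \<forall>e\<in>idx (length a). e \<notin> sector (length a) s \<longrightarrow> Qentry a e f = 0"
    using Qentry_eq_0_off_sector by blast
  show "\<forall>k>s. \<forall>e\<in>sector (length a) s. \<forall>f\<in>sector (length a) s. \<forall>n.
          coeff (fps_nth (Qentry a e f) n) k = 0"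
    using degree_Qentry_le by (meson coeff_eq_0 le_less_trans)
  define f where "f = replicate s (1::nat) @ replicate (length a - s) 2"
  have f: "f \<in> sector (length a) s"
    unfolding f_def using assms(3) by (rule replicate_in_sector)
  then have "degree (fps_nth (Qentry a f f) 0) = s" and "fps_nth (Qentry a f f) 0 \<noteq> 0"
    using Qentry_diagonal_weight_0 degree_prod_diag_factor[OF assms(2)]
      prod_diag_factor_nonzero[OF assms(2)]
    by (auto simp: sector_def idx_def)
  then have "coeff (fps_nth (Qentry a f f) 0) s \<noteq> 0" by auto
  with f show "\<exists>e\<in>sector (length a) s. \<exists>f\<in>sector (length a) s. \<exists>n.
      coeff (fps_nth (Qentry a e f) n) s \<noteq> 0" by blast
qed

end
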